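(* Let $\mathcal{H}>0$ be a constant such that $\|e^{-t\Delta^2}\varphi\|_{L^q}\leq\mathcal{H}t^{-\frac N4(\frac1p-\frac1q)}\|\varphi\|_{L^p}$ for all $1\leq p\leq q\leq\infty$, $t>0$, $\varphi\in L^p(\mathbb{R}^N)$, with $N=8$. Then for every $g\in L^1(\mathbb{R}^8)\cap L^4(\mathbb{R}^8)$, $$\|e^{-t\Delta^2}g\|_{L^\phi(\mathbb{R}^8)}\leq\zeta(t)\big(\|g\|_{L^1}+\|g\|_{L^4}\big)\quad\text{for all }t>0,$$ where $$\zeta(t)=\frac{\mathcal{H}}{\sqrt{\log2}}\min\Big\{1+t^{-1/2},\ t^{-2}\big(\log(t^{-2}+1)\big)^{-1/4}\Big\},$$ and $\zeta\in L^1(0,\infty)$.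
   Context: $e^{-t\Delta^2}$ denotes the biharmonic heat semigroup on $\mathbb{R}^8$: $e^{-t\Delta^2}\varphi=E_t\star\varphi$ with $E_t(x)=(2\pi)^{-8}\int e^{-t|\xi|^4}e^{ix\cdot\xi}\,d\xi$. Let $\phi(s)=e^{s^2}-1-s^2$. The Orlicz space $L^\phi(\mathbb{R}^8)$ is the set of $u\in L^1_{loc}(\mathbb{R}^8)$ such that $\int\phi(|u|/\alpha)\,dx<\infty$ for some $\alpha>0$, with Luxemburg norm $\|u\|_{L^\phi}=\inf\{\alpha>0:\int_{\mathbb{R}^8}\phi(|u(x)|/\alpha)\,dx\leq1\}$. *)

theory Defs
  imports "HOL-Analysis.Analysis" "HOL-Probability.Essential_Supremum"
begin

definition bihE :: "real \<Rightarrow> real^8 \<Rightarrow> complex" where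
  "bihE t x = complex_of_real (1 / (2 * pi) ^ 8) *
     (\<integral>\<xi>. complex_of_real (exp (- t * norm \<xi> ^ 4)) * cis (x \<bullet> \<xi>) \<partial>lborel)"

text \<open>Biharmonic heat semigroup: e^(-t Delta^2) phi = E_t convolved with phi.\<close>
definition bih_heat :: "real \<Rightarrow> (real^8 \<Rightarrow> real) \<Rightarrow> real^8 \<Rightarrow> complex" where
  "bih_heat t \<phi> x = (\<integral>y. bihE t (x - y) * complex_of_real (\<phi> y) \<partial>lborel)"

text \<open>L^p norm for p in [1, infinity] (as an extended real exponent), valued in ennreal
  (infinity when the function is not p-integrable).\<close>
definition Lp_norm :: "ereal \<Rightarrow> (real^8 \<Rightarrow> 'b::real_normed_vector) \<Rightarrow> ennreal" where
  "Lp_norm p f =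
     (if p = \<infinity> then e2ennreal (esssup lborel (\<lambda>x. ereal (norm (f x))))
      else (let I = (\<integral>\<^sup>+x. ennreal (norm (f x) powr real_of_ereal p) \<partial>lborel)
            in if I = \<infinity> then \<infinity> else ennreal (enn2real I powr (1 / real_of_ereal p))))"

definition memLp :: "ereal \<Rightarrow> (real^8 \<Rightarrow> 'b::real_normed_vector) \<Rightarrow> bool" where
  "memLp p f \<longleftrightarrow> f \<in> borel_measurable lborel \<and> Lp_norm p f < \<infinity>"

definition inv_exp :: "ereal \<Rightarrow> real" where
  "inv_exp p = (if p = \<infinity> then 0 else 1 / real_of_ereal p)"

definition phiO :: "real \<Rightarrow> real" where
  "phiO s = exp (s\<^sup>2) - 1 - s\<^sup>2"

text \<open>Luxemburg norm of the Orlicz space L^phi, valued in ennreal (Inf {} = infinity,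
  i.e. infinite norm for functions outside L^phi).\<close>
definition Orlicz_norm :: "(real^8 \<Rightarrow> 'b::real_normed_vector) \<Rightarrow> ennreal" where
  "Orlicz_norm u = Inf {ennreal \<alpha> | \<alpha>. \<alpha> > 0 \<and>
      (\<integral>\<^sup>+x. ennreal (phiO (norm (u x) / \<alpha>)) \<partial>lborel) \<le> 1}"

definition zeta :: "real \<Rightarrow> real \<Rightarrow> real" where
  "zeta H t = H / sqrt (ln 2) *
     min (1 + t powr (-1/2)) (t powr (-2) * (ln (t powr (-2) + 1)) powr (-1/4))"

end

theory Submission
  imports Defs
begin

text \<open>Since \<open>phiO s / s^4\<close> is nondecreasing, a function with \<open>|u| \<le> B\<close> a.e. satisfies
  \<open>\<integral> phiO (|u| / \<alpha>) \<le> phiO (B / \<alpha>) \<parallel>u\<parallel>\<^sub>4^4 / B^4\<close>, so the Luxemburg norm is controlled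
  by the \<open>L^\<infinity>\<close> and \<open>L^4\<close> norms. The smoothing estimate bounds these in two ways: from
  \<open>\<parallel>g\<parallel>\<^sub>4\<close> by \<open>H t^(-1/2) \<parallel>g\<parallel>\<^sub>4\<close> and \<open>H \<parallel>g\<parallel>\<^sub>4\<close>, giving the bound \<open>(1 + t^(-1/2))\<close>;
  and from \<open>\<parallel>g\<parallel>\<^sub>1\<close> by \<open>H t^(-2) \<parallel>g\<parallel>\<^sub>1\<close> and \<open>H t^(-3/2) \<parallel>g\<parallel>\<^sub>1\<close>, whose ratio \<open>t^(-1/2)\<close>
  forces the logarithmic factor \<open>t^(-2) (log (t^(-2) + 1))^(-1/4)\<close>. The minimum \<open>\<zeta>\<close> is
  integrable, being \<open>O(t^(-1/2))\<close> near \<open>0\<close> and \<open>O(t^(-3/2))\<close> at infinity.\<close>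

lemma phiO_nonneg: "phiO s \<ge> 0"
  unfolding phiO_def using exp_ge_add_one_self[of "s\<^sup>2"] by linarith

lemma phiO_sums: "(\<lambda>n. (s\<^sup>2) ^ (n + 2) / fact (n + 2)) sums phiO s"
proof -
  have "(\<lambda>n. (s\<^sup>2) ^ (n + 2) /\<^sub>R fact (n + 2)) sums (exp (s\<^sup>2) - (\<Sum>i<2. (s\<^sup>2) ^ i /\<^sub>R fact i))"
    using sums_split_initial_segment[OF exp_converges[of "s\<^sup>2"], of 2] by simp
  then show ?thesis
    unfolding phiO_def by (simp add: divide_inverse_commute numeral_2_eq_2 diff_diff_eq)
qed

text \<open>Every term of the power series of \<open>phiO\<close> has degree at least 4, so \<open>phiO s / s^4\<close> increases.\<close>
lemma phiO_mult_power4_le: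
  assumes "0 \<le> s" "s \<le> y"
  shows "phiO s * y ^ 4 \<le> s ^ 4 * phiO y"
proof (rule sums_le)
  show "(\<lambda>n. (s\<^sup>2) ^ (n + 2) / fact (n + 2) * y ^ 4) sums (phiO s * y ^ 4)"
    by (rule sums_mult2[OF phiO_sums])
  show "(\<lambda>n. s ^ 4 * ((y\<^sup>2) ^ (n + 2) / fact (n + 2))) sums (s ^ 4 * phiO y)"
    by (rule sums_mult[OF phiO_sums])
  fix n
  have "(s\<^sup>2) ^ n \<le> (y\<^sup>2) ^ n"
    using assms by (intro power_mono) (auto intro: power_mono)
  then have "s ^ 4 * y ^ 4 * (s\<^sup>2) ^ n \<le> s ^ 4 * y ^ 4 * (y\<^sup>2) ^ n"
    by (rule mult_left_mono) simp
  then have "(s\<^sup>2) ^ (n + 2) * y ^ 4 \<le> s ^ 4 * (y\<^sup>2) ^ (n + 2)"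
    by (simp add: power_add flip: power_mult) (simp add: ac_simps)
  then show "(s\<^sup>2) ^ (n + 2) / fact (n + 2) * y ^ 4 \<le> s ^ 4 * ((y\<^sup>2) ^ (n + 2) / fact (n + 2))"
    by (simp add: divide_right_mono)
qed

lemma phiO_sqrt_ln2_mult_le: "phiO (sqrt (ln 2) * w) \<le> exp (w ^ 4) - 1"
proof -
  have l2: "0 < ln (2::real)" "ln (2::real) < 1" using ln_2_less_1 by auto
  let ?x = "ln 2 * w\<^sup>2"
  have w4: "w ^ 4 = (w\<^sup>2)\<^sup>2" by simp
  have x0: "0 \<le> ?x" using l2 by simp
  have "phiO (sqrt (ln 2) * w) = exp ?x - 1 - ?x" unfolding phiO_def by (simp add: power_mult_distrib)
  also have "\<dots> \<le> exp (w ^ 4) - 1"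
  proof (cases "ln 2 \<le> w\<^sup>2")
    case True
    then have "?x \<le> w ^ 4" unfolding w4 by (simp add: power2_eq_square mult_right_mono)
    then have "exp ?x \<le> exp (w ^ 4)" by simp
    then show ?thesis using x0 by linarith
  next
    case False
    then have "?x \<le> 1" using l2 by (intro mult_le_one) auto
    then have "exp ?x \<le> 1 + ?x + ?x\<^sup>2" using x0 by (intro exp_bound)
    moreover have "?x\<^sup>2 \<le> w ^ 4"
      unfolding w4 using l2 by (simp add: power_mult_distrib mult_left_le_one_le power_le_one)
    moreover have "w ^ 4 \<le> exp (w ^ 4) - 1" using exp_ge_add_one_self[of "w ^ 4"] by linarith
    ultimately show ?thesis by simp
  qed
  finally show ?thesis .
qed

lemma Lp_norm_infinity_leD:
  fixes u :: "real^8 \<Rightarrow> 'b::real_normed_vector"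
  assumes "Lp_norm \<infinity> u \<le> ennreal K" "0 \<le> K"
  shows "(\<lambda>x. norm (u x)) \<in> borel_measurable lborel" "AE x in lborel. norm (u x) \<le> K"
proof -
  let ?f = "\<lambda>x. ereal (norm (u x))"
  have E: "e2ennreal (esssup lborel ?f) \<le> ennreal K" using assms(1) by (simp add: Lp_norm_def)
  have "?f \<in> borel_measurable lborel"
  proof (rule ccontr)
    assume "?f \<notin> borel_measurable lborel"
    then have "esssup lborel ?f = top" by (rule esssup_non_measurable)
    then show False using E by (simp add: top_ereal_def top_unique)
  qed
  then show "(\<lambda>x. norm (u x)) \<in> borel_measurable lborel" by simp
  have "esssup lborel ?f \<le> ereal K"
  proof (cases "0 \<le> esssup lborel ?f")
    case True
    have "enn2ereal (e2ennreal (esssup lborel ?f)) \<le> enn2ereal (ennreal K)"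
      using E by (simp add: less_eq_ennreal.rep_eq)
    then show ?thesis using True assms(2) by (simp add: enn2ereal_e2ennreal)
  next
    case False
    then show ?thesis using assms(2) by (meson ereal_less_eq(5) linear order_trans zero_ereal_def)
  qed
  with esssup_AE[of ?f lborel] show "AE x in lborel. norm (u x) \<le> K"
    by (elim eventually_mono) (metis ereal_less_eq(3) order_trans)
qed

lemma Lp_norm_4_leD:
  fixes u :: "real^8 \<Rightarrow> 'b::real_normed_vector"
  assumes "Lp_norm 4 u \<le> ennreal K" "0 \<le> K"
  shows "(\<integral>\<^sup>+x. ennreal (norm (u x) ^ 4) \<partial>lborel) \<le> ennreal (K ^ 4)"
proof -
  define I where "I = (\<integral>\<^sup>+x. ennreal (norm (u x) ^ 4) \<partial>lborel)"
  have LP: "Lp_norm 4 u = (if I = \<infinity> then \<infinity> else ennreal (enn2real I powr (1/4)))"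
    unfolding Lp_norm_def I_def Let_def by simp
  have finite: "I \<noteq> \<infinity>" using assms LP by (auto split: if_splits simp: top_unique)
  then have "enn2real I powr (1/4) \<le> K" using assms LP by simp
  then have "(enn2real I powr (1/4)) ^ 4 \<le> K ^ 4" by (rule power_mono) auto
  moreover have "(enn2real I powr (1/4)) ^ 4 = enn2real I"
    by (cases "enn2real I = 0") (simp_all add: powr_power)
  ultimately have "enn2real I \<le> K ^ 4" by simp
  with finite show ?thesis unfolding I_def[symmetric]
    by (metis ennreal_enn2real ennreal_leI infinity_ennreal_def top.not_eq_extremum)
qed

lemma Orlicz_norm_le_of_Lp_norm_bounds:
  fixes u :: "real^8 \<Rightarrow> 'b::real_normed_vector"
  assumes Linf: "Lp_norm \<infinity> u \<le> ennreal B" and L4: "Lp_norm 4 u \<le> ennreal K"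
    and B: "0 < B" and K: "0 \<le> K" and \<alpha>: "0 < \<alpha>"
    and le: "phiO (B / \<alpha>) * K ^ 4 \<le> B ^ 4"
  shows "Orlicz_norm u \<le> ennreal \<alpha>"
proof -
  define c where "c = phiO (B / \<alpha>) / B ^ 4"
  have c0: "0 \<le> c" unfolding c_def using phiO_nonneg B by simp
  have meas: "(\<lambda>x. norm (u x)) \<in> borel_measurable lborel"
    and bounded: "AE x in lborel. norm (u x) \<le> B"
    using Lp_norm_infinity_leD[OF Linf] B by auto
  have "AE x in lborel. ennreal (phiO (norm (u x) / \<alpha>)) \<le> ennreal c * ennreal (norm (u x) ^ 4)"
    using bounded
  proof (rule eventually_mono)
    fix x assume x: "norm (u x) \<le> B"
    have "phiO (norm (u x) / \<alpha>) * (B / \<alpha>) ^ 4 \<le> (norm (u x) / \<alpha>) ^ 4 * phiO (B / \<alpha>)"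
      using x \<alpha> by (intro phiO_mult_power4_le) (auto simp: divide_right_mono)
    then have "phiO (norm (u x) / \<alpha>) \<le> c * norm (u x) ^ 4"
      unfolding c_def using \<alpha> B by (simp add: field_simps)
    then show "ennreal (phiO (norm (u x) / \<alpha>)) \<le> ennreal c * ennreal (norm (u x) ^ 4)"
      using c0 by (simp add: ennreal_mult[symmetric])
  qed
  then have "(\<integral>\<^sup>+x. ennreal (phiO (norm (u x) / \<alpha>)) \<partial>lborel)
      \<le> (\<integral>\<^sup>+x. ennreal c * ennreal (norm (u x) ^ 4) \<partial>lborel)"
    by (rule nn_integral_mono_AE)
  also have "\<dots> = ennreal c * (\<integral>\<^sup>+x. ennreal (norm (u x) ^ 4) \<partial>lborel)"
    by (intro nn_integral_cmult measurable_compose[OF meas]) simp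
  also have "\<dots> \<le> ennreal c * ennreal (K ^ 4)"
    using Lp_norm_4_leD[OF L4 K] by (rule mult_left_mono) simp
  also have "\<dots> \<le> 1"
    using le c0 B unfolding c_def by (simp add: ennreal_mult[symmetric] field_simps)
  finally show ?thesis unfolding Orlicz_norm_def using \<alpha> by (intro Inf_lower) auto
qed

lemma Orlicz_norm_eq_0_if_Lp_norm_infinity_eq_0:
  fixes u :: "real^8 \<Rightarrow> 'b::real_normed_vector"
  assumes "Lp_norm \<infinity> u = 0"
  shows "Orlicz_norm u = 0"
proof -
  have "AE x in lborel. norm (u x) \<le> 0"
    using assms by (intro Lp_norm_infinity_leD(2)) auto
  then have "AE x in lborel. ennreal (phiO (norm (u x) / \<alpha>)) = 0" for \<alpha>
    by (elim eventually_mono) (simp add: phiO_def)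
  then have "(\<integral>\<^sup>+x. ennreal (phiO (norm (u x) / \<alpha>)) \<partial>lborel) = 0" for \<alpha>
    using nn_integral_cong_AE by force
  then have "Orlicz_norm u \<le> ennreal \<alpha>" if "0 < \<alpha>" for \<alpha>
    unfolding Orlicz_norm_def using that by (intro Inf_lower) auto
  then show ?thesis by (metis ennreal_le_epsilon add_0 le_zero_eq)
qed

lemma Orlicz_norm_le_of_Lp_norm_le:
  fixes u :: "real^8 \<Rightarrow> 'b::real_normed_vector"
  assumes "Lp_norm \<infinity> u \<le> ennreal B" "Lp_norm 4 u \<le> ennreal B" "0 < B"
  shows "Orlicz_norm u \<le> ennreal (B / sqrt (ln 2))"
proof (rule Orlicz_norm_le_of_Lp_norm_bounds[OF assms(1,2,3)])
  have l2: "0 < ln (2::real)" "ln (2::real) < 1" using ln_2_less_1 by auto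
  then have "phiO (B / (B / sqrt (ln 2))) = 1 - ln 2"
    using assms(3) by (simp add: phiO_def)
  then show "phiO (B / (B / sqrt (ln 2))) * B ^ 4 \<le> B ^ 4"
    using l2 assms(3) by simp
qed (use assms(3) ln_2_less_1 in auto)

text \<open>The radius is chosen so that \<open>B / \<alpha> = sqrt (ln 2) * L powr (1/4)\<close> with
  \<open>L = ln ((B / K)^4 + 1)\<close>; then \<open>phiO (B / \<alpha>) \<le> exp L - 1 = (B / K)^4\<close>.\<close>
lemma Orlicz_norm_le_of_Lp_norm_ratio:
  fixes u :: "real^8 \<Rightarrow> 'b::real_normed_vector"
  assumes "Lp_norm \<infinity> u \<le> ennreal B" "Lp_norm 4 u \<le> ennreal K" "0 < B" "0 < K"
  shows "Orlicz_norm u \<le> ennreal (B * ln ((B / K) ^ 4 + 1) powr (-1/4) / sqrt (ln 2))"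
proof -
  define L where "L = ln ((B / K) ^ 4 + 1)"
  have r: "0 < (B / K) ^ 4" using assms(3,4) by simp
  then have L: "0 < L" unfolding L_def by (simp add: ln_gt_zero)
  have "L powr (-1/4) * L powr (1/4) = 1" using L by (simp add: powr_add[symmetric])
  then have "B / (B * L powr (-1/4) / sqrt (ln 2)) = sqrt (ln 2) * L powr (1/4)"
    using assms(3) L by (simp add: field_simps)
  then have "phiO (B / (B * L powr (-1/4) / sqrt (ln 2))) \<le> exp ((L powr (1/4)) ^ 4) - 1"
    by (simp only: phiO_sqrt_ln2_mult_le)
  also have "\<dots> = exp L - 1" using L by (simp add: powr_power)
  also have "exp L = (B / K) ^ 4 + 1" unfolding L_def using r by (intro exp_ln) linarith
  finally have "phiO (B / (B * L powr (-1/4) / sqrt (ln 2))) * K ^ 4 \<le> (B / K) ^ 4 * K ^ 4"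
    using assms(4) by (intro mult_right_mono) auto
  also have "\<dots> = B ^ 4" using assms(4) by (simp add: power_divide)
  finally have "phiO (B / (B * L powr (-1/4) / sqrt (ln 2))) * K ^ 4 \<le> B ^ 4" .
  with assms L show ?thesis
    unfolding L_def by (intro Orlicz_norm_le_of_Lp_norm_bounds) auto
qed

lemma set_integrable_lborel_of_absolutely_integrable:
  fixes f :: "real \<Rightarrow> real"
  assumes "f absolutely_integrable_on A" "A \<in> sets lborel" "f \<in> borel_measurable lborel"
  shows "set_integrable lborel A f"
  using assms unfolding set_integrable_def by (subst integrable_completion[symmetric]) auto

lemma set_integrable_powr_Ioc_0_1:
  assumes "-1 < a"
  shows "set_integrable lborel {0<..1::real} (\<lambda>x. x powr a)"
proof (rule set_integrable_lborel_of_absolutely_integrable)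
  show "(\<lambda>x::real. x powr a) absolutely_integrable_on {0<..1}"
    using assms by (intro nonnegative_absolutely_integrable_1 integrable_on_powr_from_0') auto
qed auto

lemma set_integrable_powr_Ici_1:
  assumes "a < -1"
  shows "set_integrable lborel {1::real..} (\<lambda>x. x powr a)"
proof (rule set_integrable_lborel_of_absolutely_integrable)
  have "(\<lambda>x::real. x powr a) integrable_on {1..}"
    using has_integral_powr_to_inf[of a 1] assms by (auto simp: integrable_on_def)
  then show "(\<lambda>x::real. x powr a) absolutely_integrable_on {1..}"
    by (rule nonnegative_absolutely_integrable_1) auto
qed auto

lemma zeta_nonneg:
  assumes "0 < H" "0 < t"
  shows "0 \<le> zeta H t"
proof -
  have "0 < ln (t powr (-2) + 1)" using assms by (simp add: ln_gt_zero)
  then show ?thesis using assms unfolding zeta_def by auto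
qed

lemma zeta_le_powr_le_1:
  assumes "0 < H" "0 < t" "t \<le> 1"
  shows "zeta H t \<le> 2 * H / sqrt (ln 2) * t powr (-1/2)"
proof -
  have "1 \<le> t powr (-1/2)" using assms by (simp add: powr_minus one_le_inverse powr_le1)
  then have "min (1 + t powr (-1/2)) (t powr (-2) * ln (t powr (-2) + 1) powr (-1/4))
      \<le> 2 * t powr (-1/2)"
    by linarith
  then have "H / sqrt (ln 2) * min (1 + t powr (-1/2)) (t powr (-2) * ln (t powr (-2) + 1) powr (-1/4))
      \<le> H / sqrt (ln 2) * (2 * t powr (-1/2))"
    using assms by (intro mult_left_mono) auto
  also have "\<dots> = 2 * H / sqrt (ln 2) * t powr (-1/2)" by simp
  finally show ?thesis unfolding zeta_def .
qed

text \<open>For \<open>t \<ge> 1\<close> the logarithm is at least \<open>t powr (-2) / 2\<close>.\<close>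
lemma zeta_le_powr_ge_1:
  assumes "0 < H" "1 \<le> t"
  shows "zeta H t \<le> 2 * H / sqrt (ln 2) * t powr (-3/2)"
proof -
  define x where "x = t powr (-2)"
  have x: "0 < x" "x \<le> 1"
    using assms ge_one_powr_ge_zero[of t 2] unfolding x_def by (auto simp: powr_minus inverse_le_1_iff)
  have "exp (x / 2) \<le> 1 + x / 2 + (x / 2)\<^sup>2" using x by (intro exp_bound) auto
  also have "\<dots> \<le> 1 + x"
  proof -
    have "x * x \<le> x" using x by (intro mult_left_le_one_le) auto
    with x show ?thesis unfolding power2_eq_square by linarith
  qed
  finally have "x / 2 \<le> ln (x + 1)" using x by (subst ln_ge_iff) (auto simp: add.commute)
  then have "ln (x + 1) powr (-1/4) \<le> (x / 2) powr (-1/4)" using x by (intro powr_mono2') auto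
  also have "\<dots> = x powr (-1/4) / 2 powr (-1/4)" by (rule powr_divide)
  also have "x powr (-1/4) = t powr (1/2)" unfolding x_def powr_powr by simp
  also have "t powr (1/2) / 2 powr (-1/4) = t powr (1/2) * 2 powr (1/4)"
  proof -
    have "(2::real) powr (-1/4) * 2 powr (1/4) = 1" by (simp add: powr_add[symmetric])
    then show ?thesis by (simp add: field_simps)
  qed
  also have "\<dots> \<le> t powr (1/2) * 2"
    using powr_mono[of "1/4" 1 "2::real"] by (intro mult_left_mono) auto
  finally have "x * ln (x + 1) powr (-1/4) \<le> x * (t powr (1/2) * 2)"
    using x by (intro mult_left_mono) auto
  also have "\<dots> = 2 * t powr (-3/2)"
    unfolding x_def using assms by (simp add: powr_add[symmetric])
  finally have "min (1 + t powr (-1/2)) (x * ln (x + 1) powr (-1/4)) \<le> 2 * t powr (-3/2)"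
    by (rule min.coboundedI2)
  then have "H / sqrt (ln 2) * min (1 + t powr (-1/2)) (x * ln (x + 1) powr (-1/4))
      \<le> H / sqrt (ln 2) * (2 * t powr (-3/2))"
    using assms by (intro mult_left_mono) auto
  also have "\<dots> = 2 * H / sqrt (ln 2) * t powr (-3/2)" by simp
  finally show ?thesis unfolding zeta_def x_def[symmetric] .
qed

lemma set_integrable_zeta:
  assumes "0 < H"
  shows "set_integrable lborel {0<..} (zeta H)"
proof -
  have "zeta H \<in> borel_measurable lborel" unfolding zeta_def by measurable
  then have meas: "set_borel_measurable lborel A (zeta H)" if "A \<in> sets borel" for A
    using that unfolding set_borel_measurable_def
    by (intro borel_measurable_scaleR borel_measurable_indicator) auto
  have "set_integrable lborel {0<..1} (zeta H)"
  proof -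
    have "set_integrable lborel {0<..1} (\<lambda>x. 2 * H / sqrt (ln 2) * x powr (-1/2))"
      by (intro set_integrable_mult_right set_integrable_powr_Ioc_0_1) simp
    then show ?thesis
    proof (rule set_integrable_bound[OF _ meas])
      show "AE x in lborel. x \<in> {0<..1} \<longrightarrow> norm (zeta H x) \<le> norm (2 * H / sqrt (ln 2) * x powr (-1/2))"
        using assms zeta_le_powr_le_1 zeta_nonneg by (auto intro!: AE_I2)
    qed auto
  qed
  moreover have "set_integrable lborel {1..} (zeta H)"
  proof -
    have "set_integrable lborel {1..} (\<lambda>x. 2 * H / sqrt (ln 2) * x powr (-3/2))"
      by (intro set_integrable_mult_right set_integrable_powr_Ici_1) simp
    then show ?thesis
    proof (rule set_integrable_bound[OF _ meas])
      show "AE x in lborel. x \<in> {1..} \<longrightarrow> norm (zeta H x) \<le> norm (2 * H / sqrt (ln 2) * x powr (-3/2))"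
        using assms zeta_le_powr_ge_1 zeta_nonneg by (auto intro!: AE_I2)
    qed auto
  qed
  ultimately have "set_integrable lborel ({0<..1} \<union> {1..}) (zeta H)"
    by (rule set_integrable_Un) auto
  moreover have "{0<..1} \<union> {1..} = {0::real<..}" by auto
  ultimately show ?thesis by simp
qed

lemma zeta_altdef:
  assumes "0 < t"
  shows "zeta H t = H * min ((1 + t powr (-1/2)) / sqrt (ln 2))
    ((t powr (-1/2)) ^ 4 * ln ((t powr (-1/2)) ^ 4 + 1) powr (-1/4) / sqrt (ln 2))"
proof -
  have "t powr (-2) = (t powr (-1/2)) ^ 4" using assms by (simp add: powr_power)
  then have "zeta H t = H * (min (1 + t powr (-1/2))
      ((t powr (-1/2)) ^ 4 * ln ((t powr (-1/2)) ^ 4 + 1) powr (-1/4)) / sqrt (ln 2))"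
    unfolding zeta_def by simp
  also have "\<dots> = H * min ((1 + t powr (-1/2)) / sqrt (ln 2))
    ((t powr (-1/2)) ^ 4 * ln ((t powr (-1/2)) ^ 4 + 1) powr (-1/4) / sqrt (ln 2))"
    by (subst min_divide_distrib_right) simp
  finally show ?thesis .
qed

lemma Orlicz_norm_le_zeta:
  fixes u :: "real^8 \<Rightarrow> 'b::real_normed_vector"
  assumes H: "0 < H" and t: "0 < t" and G: "0 \<le> G1" "0 \<le> G4"
    and L4_Linf: "Lp_norm \<infinity> u \<le> ennreal (H * t powr (-1/2) * G4)"
    and L4_L4: "Lp_norm 4 u \<le> ennreal (H * G4)"
    and L1_Linf: "Lp_norm \<infinity> u \<le> ennreal (H * t powr (-2) * G1)"
    and L1_L4: "Lp_norm 4 u \<le> ennreal (H * t powr (-3/2) * G1)"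
  shows "Orlicz_norm u \<le> ennreal (zeta H t * (G1 + G4))"
proof (cases "G1 + G4 = 0")
  case True
  then have "G4 = 0" using G by linarith
  then have "Lp_norm \<infinity> u = 0" using L4_Linf by simp
  then show ?thesis by (simp add: Orlicz_norm_eq_0_if_Lp_norm_infinity_eq_0)
next
  case False
  define a where "a = H * (G1 + G4)"
  define s where "s = t powr (-1/2)"
  have a: "0 < a" unfolding a_def using H G False by simp
  have s: "0 < s" unfolding s_def using t by simp
  have "H * t powr (-2) * G1 \<le> a * s ^ 4" "H * t powr (-3/2) * G1 \<le> a * s ^ 3"
    unfolding a_def s_def using t H G by (simp_all add: powr_power mult_left_mono)
  then have "Lp_norm \<infinity> u \<le> ennreal (a * s ^ 4)" "Lp_norm 4 u \<le> ennreal (a * s ^ 3)"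
    using L1_Linf L1_L4 by (auto elim!: order_trans intro!: ennreal_leI)
  moreover have "a * s ^ 4 / (a * s ^ 3) = s" using a s by (simp add: eval_nat_numeral)
  ultimately have long: "Orlicz_norm u \<le> ennreal (a * s ^ 4 * ln (s ^ 4 + 1) powr (-1/4) / sqrt (ln 2))"
    using Orlicz_norm_le_of_Lp_norm_ratio[of u "a * s ^ 4" "a * s ^ 3"] a s by simp
  have "H * (s * G4) \<le> H * ((1 + s) * (G1 + G4))" "H * (1 * G4) \<le> H * ((1 + s) * (G1 + G4))"
    using G s H by (intro mult_left_mono mult_mono; simp)+
  then have "H * s * G4 \<le> a * (1 + s)" "H * G4 \<le> a * (1 + s)"
    unfolding a_def by (simp_all add: ac_simps)
  then have "Lp_norm \<infinity> u \<le> ennreal (a * (1 + s))" "Lp_norm 4 u \<le> ennreal (a * (1 + s))"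
    using L4_Linf L4_L4 unfolding s_def by (auto elim!: order_trans intro!: ennreal_leI)
  then have short: "Orlicz_norm u \<le> ennreal (a * (1 + s) / sqrt (ln 2))"
    using a s by (intro Orlicz_norm_le_of_Lp_norm_le) auto
  have "zeta H t * (G1 + G4)
      = a * min ((1 + s) / sqrt (ln 2)) (s ^ 4 * ln (s ^ 4 + 1) powr (-1/4) / sqrt (ln 2))"
    unfolding zeta_altdef[OF t] a_def s_def by (simp only: ac_simps)
  also have "\<dots> = min (a * (1 + s) / sqrt (ln 2)) (a * s ^ 4 * ln (s ^ 4 + 1) powr (-1/4) / sqrt (ln 2))"
    using a by (subst min_mult_distrib_left) simp
  finally show ?thesis using short long by (simp add: min_def)
qed

theorem corollary3p6:
  fixes H :: real
  assumes Hpos: "H > 0"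
    and smoothing: "\<And>p q t \<phi>. 1 \<le> p \<Longrightarrow> p \<le> q \<Longrightarrow> t > 0 \<Longrightarrow> memLp p (\<phi> :: real^8 \<Rightarrow> real) \<Longrightarrow>
        Lp_norm q (bih_heat t \<phi>)
          \<le> ennreal (H * t powr (- (8 / 4) * (inv_exp p - inv_exp q))) * Lp_norm p \<phi>"
  shows "(\<forall>g :: real^8 \<Rightarrow> real. memLp 1 g \<and> memLp 4 g \<longrightarrow>
           (\<forall>t > 0. Orlicz_norm (bih_heat t g)
                     \<le> ennreal (zeta H t * (enn2real (Lp_norm 1 g) + enn2real (Lp_norm 4 g)))))
         \<and> set_integrable lborel {0<..} (zeta H)"
proof (intro conjI allI impI)
  show "set_integrable lborel {0<..} (zeta H)" using Hpos by (rule set_integrable_zeta)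
next
  fix g :: "real^8 \<Rightarrow> real" and t :: real
  assume g: "memLp 1 g \<and> memLp 4 g" and t: "t > 0"
  have smooth: "Lp_norm q (bih_heat t g)
      \<le> ennreal (H * t powr (- 2 * (inv_exp p - inv_exp q)) * enn2real (Lp_norm p g))"
    if "1 \<le> p" "p \<le> q" "memLp p g" for p q
  proof -
    have "Lp_norm p g = ennreal (enn2real (Lp_norm p g))"
      using \<open>memLp p g\<close> unfolding memLp_def by (simp add: less_top)
    then show ?thesis
      using smoothing[OF that(1,2) t that(3)] Hpos by (simp add: ennreal_mult)
  qed
  show "Orlicz_norm (bih_heat t g) \<le> ennreal (zeta H t * (enn2real (Lp_norm 1 g) + enn2real (Lp_norm 4 g)))"
    using smooth[of 4 \<infinity>] smooth[of 4 4] smooth[of 1 \<infinity>] smooth[of 1 4] g t Hpos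
    by (intro Orlicz_norm_le_zeta) (simp_all add: inv_exp_def)
qed

end
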